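(* Let $\mathcal{M}$ be a Riemannian manifold with a retraction $R$, and for $x,y\in\mathcal{M}$, $r,t\in[0,1]$ let $c_r(t;x,y)=R_{q(r)}\big((1-t)R_{q(r)}^{-1}(x)+tR_{q(r)}^{-1}(y)\big)$ with $q(r)=R_x(rR_x^{-1}(y))$. Let $b_0,b_1,b_2,b_3\in\mathcal{M}$ and let $r_1:[0,1]\to[0,1]$, $r_{01},r_{12}:[0,1]^2\to[0,1]$ and $r_{012}:[0,1]^3\to[0,1]$ be smooth functions such that $$r_{01}(s,0)=0,\quad r_{12}(s,1)=1,\quad r_{012}(s,0,0)=0,\quad r_{012}(s,1,1)=1\qquad\text{for all } s\in[0,1].$$ Define $\beta_0(t)=c_0(t;b_0,b_1)$, $\beta_1(t)=c_{r_1(t)}(t;b_1,b_2)$, $\beta_2(t)=c_1(t;b_2,b_3)$, $\beta_{01}(s,t)=c_{r_{01}(s,t)}(s;\beta_0(t),\beta_1(t))$, $\beta_{12}(s,t)=c_{r_{12}(s,t)}(s;\beta_1(t),\beta_2(t))$, $\beta_{012}(u,s,t)=c_{r_{012}(u,s,t)}(u;\beta_{01}(s,t),\beta_{12}(s,t))$, and assume that all retractions and inverse retractions involved in these definitions are well-defined for all $u,s,t\in[0,1]$. Then: (a) $\beta_i(0)=b_i$, $\beta_i(1)=b_{i+1}$ ($i=0,1,2$); $\beta_{01}(0,t)=\beta_0(t)$, $\beta_{01}(1,t)=\beta_1(t)$, $\beta_{12}(0,t)=\beta_1(t)$, $\beta_{12}(1,t)=\beta_2(t)$, $\beta_{012}(0,s,t)=\beta_{01}(s,t)$,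 $\beta_{012}(1,s,t)=\beta_{12}(s,t)$ for all $s,t\in[0,1]$; (b) $\beta_{01}(s,0)=\beta_0(s)$, $\beta_{12}(s,1)=\beta_2(s)$, $\beta_{012}(s,0,0)=\beta_0(s)$ and $\beta_{012}(s,1,1)=\beta_2(s)$ for all $s\in[0,1]$; (c) the curve $\beta(t)=\beta_{012}(t,t,t)$ satisfies $\beta(0)=b_0$, $\beta(1)=b_3$, $$\dot\beta(0)=3\dot c_0(0;b_0,b_1)=3R_{b_0}^{-1}(b_1),\qquad \dot\beta(1)=3\dot c_1(1;b_2,b_3)=-3R_{b_3}^{-1}(b_2).$$
   Context: A retraction on $\mathcal{M}$ is a smooth map $R$ from an open subset of $T\mathcal{M}$ containing all zero tangent vectors into $\mathcal{M}$, written $R_x(v)=R(x,v)$, such that $R_x(0)=x$ and $\mathrm{D}R_x(0)$ is the identity of $T_x\mathcal{M}$; $R_x^{-1}$ denotes its local inverse near $0\in T_x\mathcal{M}$. A dot denotes differentiation with respect to the curve parameter. *)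

theory Defs
  imports "HOL-Analysis.Analysis"
begin

definition smooth_open :: "'a::real_normed_vector set \<Rightarrow> ('a \<Rightarrow> 'b::real_normed_vector) \<Rightarrow> bool" where
  "smooth_open V f \<longleftrightarrow> open V \<and>
     (\<exists>F :: 'a list \<Rightarrow> 'a \<Rightarrow> 'b.
        (\<forall>x\<in>V. F [] x = f x) \<and>
        (\<forall>vs. continuous_on V (F vs) \<and>
              (\<forall>x\<in>V. (F vs has_derivative (\<lambda>v. F (v # vs) x)) (at x))))"

definition smooth_on :: "'a::real_normed_vector set \<Rightarrow> ('a \<Rightarrow> 'b::real_normed_vector) \<Rightarrow> bool" where
  "smooth_on S f \<longleftrightarrow>
     (\<forall>x\<in>S. \<exists>V g. x \<in> V \<and> smooth_open V g \<and> (\<forall>y\<in>S \<inter> V. g y = f y))"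

definition embedded_submanifold :: "'a::euclidean_space set \<Rightarrow> bool" where
  "embedded_submanifold M \<longleftrightarrow>
     (\<forall>p\<in>M. \<exists>U V (\<phi>::'a \<Rightarrow> 'a) \<psi> L. open U \<and> p \<in> U \<and> open V \<and> subspace L \<and>
        smooth_open U \<phi> \<and> smooth_open V \<psi> \<and> \<phi> ` U = V \<and>
        (\<forall>x\<in>U. \<psi> (\<phi> x) = x) \<and> (\<forall>y\<in>V. \<phi> (\<psi> y) = y) \<and>
        \<phi> ` (M \<inter> U) = V \<inter> L)"

definition tangent_space :: "'a::euclidean_space set \<Rightarrow> 'a \<Rightarrow> 'a set" where
  "tangent_space M x = {v. \<exists>\<gamma> e. 0 < e \<and> smooth_on {-e<..<e} \<gamma> \<and> \<gamma> ` {-e<..<e} \<subseteq> M \<and>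
       \<gamma> 0 = x \<and> (\<gamma> has_vector_derivative v) (at 0)}"

definition tangent_bundle :: "'a::euclidean_space set \<Rightarrow> ('a \<times> 'a) set" where
  "tangent_bundle M = Sigma M (tangent_space M)"

definition manifold_retraction :: "'a::euclidean_space set \<Rightarrow> ('a \<Rightarrow> 'a \<Rightarrow> 'a) \<Rightarrow> ('a \<times> 'a) set \<Rightarrow> bool" where
  "manifold_retraction M R DR \<longleftrightarrow>
     DR \<subseteq> tangent_bundle M \<and> openin (top_of_set (tangent_bundle M)) DR \<and>
     (\<forall>x\<in>M. (x, 0) \<in> DR) \<and>
     smooth_on DR (\<lambda>(x, v). R x v) \<and>
     (\<forall>(x, v)\<in>DR. R x v \<in> M) \<and>
     (\<forall>x\<in>M. R x 0 = x) \<and>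
     (\<forall>x\<in>M. (R x has_derivative (\<lambda>v. v)) (at 0 within tangent_space M x))"

text \<open>Rinv is a local inverse of R near the zero section: (x,v) \<mapsto> (x, R x v) is a
  bijection from DI (neighbourhood of the zero section inside DR) onto W (open in M \<times> M),
  with smooth inverse (x,y) \<mapsto> (x, Rinv x y).\<close>
definition retraction_local_inverse ::
  "'a::euclidean_space set \<Rightarrow> ('a \<Rightarrow> 'a \<Rightarrow> 'a) \<Rightarrow> ('a \<times> 'a) set \<Rightarrow>
   ('a \<Rightarrow> 'a \<Rightarrow> 'a) \<Rightarrow> ('a \<times> 'a) set \<Rightarrow> ('a \<times> 'a) set \<Rightarrow> bool" where
  "retraction_local_inverse M R DR Rinv DI W \<longleftrightarrow>
     DI \<subseteq> DR \<and> openin (top_of_set (tangent_bundle M)) DI \<and> (\<forall>x\<in>M. (x, 0) \<in> DI) \<and>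
     W \<subseteq> M \<times> M \<and> openin (top_of_set (M \<times> M)) W \<and>
     (\<forall>(x, v)\<in>DI. (x, R x v) \<in> W \<and> Rinv x (R x v) = v) \<and>
     (\<forall>(x, y)\<in>W. (x, Rinv x y) \<in> DI \<and> R x (Rinv x y) = y) \<and>
     smooth_on W (\<lambda>(x, y). Rinv x y)"

definition ret_q :: "('a::real_vector \<Rightarrow> 'a \<Rightarrow> 'a) \<Rightarrow> ('a \<Rightarrow> 'a \<Rightarrow> 'a) \<Rightarrow> real \<Rightarrow> 'a \<Rightarrow> 'a \<Rightarrow> 'a" where
  "ret_q R Rinv r x y = R x (r *\<^sub>R Rinv x y)"

definition ret_curve :: "('a::real_vector \<Rightarrow> 'a \<Rightarrow> 'a) \<Rightarrow> ('a \<Rightarrow> 'a \<Rightarrow> 'a) \<Rightarrow> real \<Rightarrow> real \<Rightarrow> 'a \<Rightarrow> 'a \<Rightarrow> 'a" where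
  "ret_curve R Rinv r t x y =
     (let q = ret_q R Rinv r x y in R q ((1 - t) *\<^sub>R Rinv q x + t *\<^sub>R Rinv q y))"

definition ret_curve_wd :: "('a::real_vector \<Rightarrow> 'a \<Rightarrow> 'a) \<Rightarrow> ('a \<times> 'a) set \<Rightarrow> ('a \<Rightarrow> 'a \<Rightarrow> 'a) \<Rightarrow>
    ('a \<times> 'a) set \<Rightarrow> real \<Rightarrow> real \<Rightarrow> 'a \<Rightarrow> 'a \<Rightarrow> bool" where
  "ret_curve_wd R DR Rinv W r t x y \<longleftrightarrow>
     (let q = ret_q R Rinv r x y in
       (x, y) \<in> W \<and> (x, r *\<^sub>R Rinv x y) \<in> DR \<and> (q, x) \<in> W \<and> (q, y) \<in> W \<and>
       (q, (1 - t) *\<^sub>R Rinv q x + t *\<^sub>R Rinv q y) \<in> DR)"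

end

theory Submission
  imports Defs
begin

text \<open>Parts (a) and (b) are evaluations: whenever the retractions involved are defined,
  \<open>c\<^sub>r(0;x,y) = x\<close>, \<open>c\<^sub>r(1;x,y) = y\<close>, \<open>c\<^sub>0(t;x,y) = R\<^sub>x(t R\<^sub>x\<^sup>-\<^sup>1(y))\<close> and
  \<open>c\<^sub>1(t;x,y) = R\<^sub>y((1-t) R\<^sub>y\<^sup>-\<^sup>1(x))\<close>.
  For (c), \<open>\<beta>\<^sub>0\<^sub>1\<^sub>2\<close> is differentiable on the cube as a composition of smooth maps, and by (a)
  and (b) its restrictions to the three coordinate lines through \<open>(0,0,0)\<close> all coincide with
  \<open>\<beta>\<^sub>0\<close> (through \<open>(1,1,1)\<close> with \<open>\<beta>\<^sub>2\<close>). So its three partial derivatives there all equal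
  the velocity \<open>R\<^sub>b\<^sub>0\<^sup>-\<^sup>1(b\<^sub>1)\<close> of \<open>\<beta>\<^sub>0\<close> at \<open>0\<close>, and the derivative along the diagonal is
  their sum.\<close>

lemma smooth_on_imp_differentiable_on:
  assumes "smooth_on S f"
  shows "f differentiable_on S"
  unfolding differentiable_on_def
proof
  fix x assume "x \<in> S"
  then obtain V g where "x \<in> V" "smooth_open V g" and gf: "\<forall>y\<in>S \<inter> V. g y = f y"
    using assms unfolding smooth_on_def by blast
  then obtain F where "open V" and F0: "\<forall>y\<in>V. F [] y = g y"
    and FD: "\<forall>y\<in>V. (F [] has_derivative (\<lambda>v. F [v] y)) (at y)"
    unfolding smooth_open_def by blast
  have "(g has_derivative (\<lambda>v. F [v] x)) (at x)"
    using has_derivative_transform_within_open[OF FD[rule_format, OF \<open>x \<in> V\<close>] \<open>open V\<close>]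
      \<open>x \<in> V\<close> F0
    by blast
  then have "g differentiable (at x within S)"
    unfolding differentiable_def using has_derivative_at_withinI by blast
  moreover obtain e where "e > 0" "ball x e \<subseteq> V"
    using \<open>open V\<close> \<open>x \<in> V\<close> open_contains_ball by blast
  ultimately show "f differentiable (at x within S)"
    using differentiable_transform_within[of g x S e f] \<open>x \<in> S\<close> gf
    by (force simp: dist_commute)
qed

lemma differentiable_on_compose_subset:
  assumes "g differentiable_on S" "f differentiable_on T" "g ` S \<subseteq> T"
  shows "(\<lambda>x. f (g x)) differentiable_on S"
  using assms differentiable_on_compose differentiable_on_subset by metis

lemma differentiable_on_Pair:
  "f differentiable_on S \<Longrightarrow> g differentiable_on S \<Longrightarrow> (\<lambda>x. (f x, g x)) differentiable_on S"
  unfolding differentiable_on_def by simp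

lemma ret_curve_differentiable_on:
  fixes r t :: "'d::real_normed_vector \<Rightarrow> real" and x y :: "'d \<Rightarrow> 'a::real_normed_vector"
  assumes sR: "smooth_on DR (\<lambda>(x, v). R x v)" and sI: "smooth_on W (\<lambda>(x, y). Rinv x y)"
    and r: "r differentiable_on S" and t: "t differentiable_on S"
    and x: "x differentiable_on S" and y: "y differentiable_on S"
    and wd: "\<forall>z\<in>S. ret_curve_wd R DR Rinv W (r z) (t z) (x z) (y z)"
  shows "(\<lambda>z. ret_curve R Rinv (r z) (t z) (x z) (y z)) differentiable_on S"
proof -
  have R_comp: "(\<lambda>z. R (a z) (v z)) differentiable_on S"
    if "a differentiable_on S" "v differentiable_on S" "\<forall>z\<in>S. (a z, v z) \<in> DR" for a v
    using differentiable_on_compose_subset[OF differentiable_on_Pair[OF that(1,2)]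
        smooth_on_imp_differentiable_on[OF sR]] that(3)
    by auto
  have Rinv_comp: "(\<lambda>z. Rinv (a z) (b z)) differentiable_on S"
    if "a differentiable_on S" "b differentiable_on S" "\<forall>z\<in>S. (a z, b z) \<in> W" for a b
    using differentiable_on_compose_subset[OF differentiable_on_Pair[OF that(1,2)]
        smooth_on_imp_differentiable_on[OF sI]] that(3)
    by auto
  define q where "q z = ret_q R Rinv (r z) (x z) (y z)" for z
  have q: "q differentiable_on S"
    unfolding q_def ret_q_def
    using wd by (intro R_comp Rinv_comp x y r derivative_intros) (auto simp: ret_curve_wd_def Let_def)
  have wd_q: "\<forall>z\<in>S. (q z, x z) \<in> W \<and> (q z, y z) \<in> W \<and>
      (q z, (1 - t z) *\<^sub>R Rinv (q z) (x z) + t z *\<^sub>R Rinv (q z) (y z)) \<in> DR"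
    using wd by (simp add: ret_curve_wd_def Let_def q_def)
  have "(\<lambda>z. R (q z) ((1 - t z) *\<^sub>R Rinv (q z) (x z) + t z *\<^sub>R Rinv (q z) (y z)))
      differentiable_on S"
    using wd_q by (intro R_comp Rinv_comp q x y t derivative_intros) auto
  then show ?thesis
    by (simp add: ret_curve_def q_def Let_def)
qed

lemma ret_curve_family_differentiable_on:
  fixes \<rho> :: "real \<times> 'p::real_normed_vector \<Rightarrow> real" and x y :: "'p \<Rightarrow> 'a::real_normed_vector"
  assumes sR: "smooth_on DR (\<lambda>(x, v). R x v)" and sI: "smooth_on W (\<lambda>(x, y). Rinv x y)"
    and \<rho>: "\<rho> differentiable_on S \<times> P" and x: "x differentiable_on P" and y: "y differentiable_on P"
    and wd: "\<forall>s\<in>S. \<forall>p\<in>P. ret_curve_wd R DR Rinv W (\<rho> (s, p)) s (x p) (y p)"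
  shows "(\<lambda>(s, p). ret_curve R Rinv (\<rho> (s, p)) s (x p) (y p)) differentiable_on S \<times> P"
proof -
  have comp_snd: "(\<lambda>z. f (snd z)) differentiable_on S \<times> P" if "f differentiable_on P"
    for f :: "'p \<Rightarrow> 'a"
    using differentiable_on_compose_subset[OF bounded_linear_imp_differentiable_on[OF bounded_linear_snd]
        that] by (force simp: subset_iff)
  have "(\<lambda>z. ret_curve R Rinv (\<rho> z) (fst z) (x (snd z)) (y (snd z))) differentiable_on S \<times> P"
    using wd by (intro ret_curve_differentiable_on[OF sR sI \<rho>] comp_snd x y
        bounded_linear_imp_differentiable_on[OF bounded_linear_fst]) auto
  then show ?thesis
    by (simp add: split_def)
qed

lemma ret_curve_endpoints:
  assumes "retraction_local_inverse M R DR Rinv DI W" "ret_curve_wd R DR Rinv W r t x y"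
  shows "ret_curve R Rinv r 0 x y = x" "ret_curve R Rinv r 1 x y = y"
  using assms unfolding retraction_local_inverse_def ret_curve_wd_def ret_curve_def Let_def
  by auto

lemma retraction_local_inverse_self:
  assumes "manifold_retraction M R DR" "retraction_local_inverse M R DR Rinv DI W" "x \<in> M"
  shows "Rinv x x = 0"
  using assms unfolding manifold_retraction_def retraction_local_inverse_def by fastforce

lemma ret_q_zero:
  assumes "manifold_retraction M R DR" "x \<in> M"
  shows "ret_q R Rinv 0 x y = x"
  using assms by (simp add: manifold_retraction_def ret_q_def)

lemma ret_q_one:
  assumes "retraction_local_inverse M R DR Rinv DI W" "(x, y) \<in> W"
  shows "ret_q R Rinv 1 x y = y"
  using assms by (auto simp: retraction_local_inverse_def ret_q_def)

lemma manifold_retraction_has_vector_derivative: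
  assumes R: "manifold_retraction M R DR" and "x \<in> M"
    and f: "(f has_vector_derivative v) (at t0 within S)" "f t0 = 0"
    and DR: "\<forall>t\<in>S. (x, f t) \<in> DR"
  shows "((\<lambda>t. R x (f t)) has_vector_derivative v) (at t0 within S)"
proof -
  have "f ` S \<subseteq> tangent_space M x"
    using DR R by (auto simp: manifold_retraction_def tangent_bundle_def)
  moreover have "(R x has_derivative (\<lambda>v. v)) (at 0 within tangent_space M x)"
    using R \<open>x \<in> M\<close> by (simp add: manifold_retraction_def)
  ultimately have "(R x has_derivative (\<lambda>v. v)) (at (f t0) within f ` S)"
    using has_derivative_subset f(2) by metis
  with f(1) show ?thesis
    unfolding has_vector_derivative_def using diff_chain_within by (fastforce simp: o_def)
qed

lemma ret_curve_zero_has_vector_derivative: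
  assumes R: "manifold_retraction M R DR" and Rinv: "retraction_local_inverse M R DR Rinv DI W"
    and wd: "\<forall>t\<in>{0..1}. ret_curve_wd R DR Rinv W 0 t x y"
  shows "((\<lambda>t. ret_curve R Rinv 0 t x y) has_vector_derivative Rinv x y) (at 0 within {0..1})"
proof -
  have "(x, y) \<in> W"
    using wd[rule_format, of 0] by (simp add: ret_curve_wd_def Let_def)
  then have "x \<in> M"
    using Rinv by (auto simp: retraction_local_inverse_def)
  note simps = ret_q_zero[OF R \<open>x \<in> M\<close>] retraction_local_inverse_self[OF R Rinv \<open>x \<in> M\<close>]
  have "((\<lambda>t. R x (t *\<^sub>R Rinv x y)) has_vector_derivative Rinv x y) (at 0 within {0..1})"
    using wd
    by (intro manifold_retraction_has_vector_derivative[OF R \<open>x \<in> M\<close>] derivative_eq_intros)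
      (auto simp: ret_curve_wd_def simps)
  then show ?thesis
    by (simp add: ret_curve_def simps)
qed

lemma ret_curve_one_has_vector_derivative:
  assumes R: "manifold_retraction M R DR" and Rinv: "retraction_local_inverse M R DR Rinv DI W"
    and wd: "\<forall>t\<in>{0..1}. ret_curve_wd R DR Rinv W 1 t x y"
  shows "((\<lambda>t. ret_curve R Rinv 1 t x y) has_vector_derivative - Rinv y x) (at 1 within {0..1})"
proof -
  have "(x, y) \<in> W"
    using wd[rule_format, of 0] by (simp add: ret_curve_wd_def Let_def)
  then have "y \<in> M"
    using Rinv by (auto simp: retraction_local_inverse_def)
  note simps = ret_q_one[OF Rinv \<open>(x, y) \<in> W\<close>] retraction_local_inverse_self[OF R Rinv \<open>y \<in> M\<close>]
  have "((\<lambda>t. R y ((1 - t) *\<^sub>R Rinv y x)) has_vector_derivative - Rinv y x) (at 1 within {0..1})"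
    using wd
    by (intro manifold_retraction_has_vector_derivative[OF R \<open>y \<in> M\<close>] derivative_eq_intros)
      (auto simp: ret_curve_wd_def simps)
  then show ?thesis
    by (simp add: ret_curve_def simps)
qed

lemma diagonal_has_vector_derivative:
  fixes F :: "real \<times> real \<times> real \<Rightarrow> 'a::real_normed_vector"
  assumes F: "F differentiable (at (c, c, c) within {a..b} \<times> {a..b} \<times> {a..b})"
    and "a < b" "c \<in> {a..b}"
    and "\<forall>u\<in>{a..b}. F (u, c, c) = g u" "\<forall>u\<in>{a..b}. F (c, u, c) = g u"
      "\<forall>u\<in>{a..b}. F (c, c, u) = g u"
    and g: "(g has_vector_derivative v) (at c within {a..b})"
  shows "((\<lambda>t. F (t, t, t)) has_vector_derivative 3 *\<^sub>R v) (at c within {a..b})"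
proof -
  let ?C = "{a..b} \<times> {a..b} \<times> {a..b}"
  obtain L where L: "(F has_derivative L) (at (c, c, c) within ?C)"
    using F unfolding differentiable_def by blast
  have line: "((\<lambda>u. F ((c, c, c) + (u - c) *\<^sub>R e)) has_vector_derivative L e) (at c within {a..b})"
    if "\<forall>u\<in>{a..b}. (c, c, c) + (u - c) *\<^sub>R e \<in> ?C" for e
  proof -
    let ?p = "\<lambda>u. (c, c, c) + (u - c) *\<^sub>R e"
    have "(?p has_derivative (\<lambda>h. h *\<^sub>R e)) (at c within {a..b})"
      by (auto intro!: derivative_eq_intros)
    moreover have "?p ` {a..b} \<subseteq> ?C"
      using that by blast
    then have "(F has_derivative L) (at (?p c) within ?p ` {a..b})"
      using has_derivative_subset[OF L] by simp
    ultimately have "(F \<circ> ?p has_derivative L \<circ> (\<lambda>h. h *\<^sub>R e)) (at c within {a..b})"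
      by (rule diff_chain_within)
    then show ?thesis
      using linear_scale[OF has_derivative_linear[OF L]]
      by (simp add: has_vector_derivative_def o_def)
  qed
  have axis: "L e = v"
    if "\<forall>u\<in>{a..b}. (c, c, c) + (u - c) *\<^sub>R e \<in> ?C"
      and "\<forall>u\<in>{a..b}. F ((c, c, c) + (u - c) *\<^sub>R e) = g u" for e
  proof -
    have "(g has_vector_derivative L e) (at c within {a..b})"
      using has_vector_derivative_transform[OF \<open>c \<in> {a..b}\<close> _ line[OF that(1)]] that(2) by simp
    with g show ?thesis
      using vector_derivative_unique_within_closed_interval[of a b c g] \<open>a < b\<close> \<open>c \<in> {a..b}\<close>
      by (simp add: cbox_interval)
  qed
  have axes: "L (1, 0, 0) = v" "L (0, 1, 0) = v" "L (0, 0, 1) = v"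
    using assms by (auto intro!: axis)
  have "L (1, 1, 1) = L ((1, 0, 0) + (0, 1, 0) + (0, 0, 1))"
    by simp
  also have "\<dots> = L (1, 0, 0) + L (0, 1, 0) + L (0, 0, 1)"
    by (simp only: linear_add[OF has_derivative_linear[OF L]])
  also have "\<dots> = 3 *\<^sub>R v"
    using axes by (simp add: scaleR_add_left[of 2 1, simplified] scaleR_2)
  finally show ?thesis
    using line[of "(1, 1, 1)"] assms by simp
qed

theorem proposition2p4:
  fixes M :: "'a::euclidean_space set"
    and R Rinv :: "'a \<Rightarrow> 'a \<Rightarrow> 'a"
    and DR DI W :: "('a \<times> 'a) set"
    and b0 b1 b2 b3 :: 'a
    and r1 :: "real \<Rightarrow> real" and r01 r12 :: "real \<Rightarrow> real \<Rightarrow> real"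
    and r012 :: "real \<Rightarrow> real \<Rightarrow> real \<Rightarrow> real"
    and \<beta>0 \<beta>1 \<beta>2 \<beta> :: "real \<Rightarrow> 'a"
    and \<beta>01 \<beta>12 :: "real \<Rightarrow> real \<Rightarrow> 'a"
    and \<beta>012 :: "real \<Rightarrow> real \<Rightarrow> real \<Rightarrow> 'a"
  assumes M: "embedded_submanifold M"
    and R: "manifold_retraction M R DR"
    and Rinv: "retraction_local_inverse M R DR Rinv DI W"
    and b: "b0 \<in> M" "b1 \<in> M" "b2 \<in> M" "b3 \<in> M"
    and r1: "smooth_on {0..1} r1" "\<forall>t\<in>{0..1}. r1 t \<in> {0..1}"
    and r01: "smooth_on ({0..1} \<times> {0..1}) (\<lambda>(s, t). r01 s t)"
             "\<forall>s\<in>{0..1}. \<forall>t\<in>{0..1}. r01 s t \<in> {0..1}"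
    and r12: "smooth_on ({0..1} \<times> {0..1}) (\<lambda>(s, t). r12 s t)"
             "\<forall>s\<in>{0..1}. \<forall>t\<in>{0..1}. r12 s t \<in> {0..1}"
    and r012: "smooth_on ({0..1} \<times> {0..1} \<times> {0..1}) (\<lambda>(u, s, t). r012 u s t)"
              "\<forall>u\<in>{0..1}. \<forall>s\<in>{0..1}. \<forall>t\<in>{0..1}. r012 u s t \<in> {0..1}"
    and bc: "\<forall>s\<in>{0..1}. r01 s 0 = 0 \<and> r12 s 1 = 1 \<and> r012 s 0 0 = 0 \<and> r012 s 1 1 = 1"
    and def_\<beta>0: "\<beta>0 = (\<lambda>t. ret_curve R Rinv 0 t b0 b1)"
    and def_\<beta>1: "\<beta>1 = (\<lambda>t. ret_curve R Rinv (r1 t) t b1 b2)"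
    and def_\<beta>2: "\<beta>2 = (\<lambda>t. ret_curve R Rinv 1 t b2 b3)"
    and def_\<beta>01: "\<beta>01 = (\<lambda>s t. ret_curve R Rinv (r01 s t) s (\<beta>0 t) (\<beta>1 t))"
    and def_\<beta>12: "\<beta>12 = (\<lambda>s t. ret_curve R Rinv (r12 s t) s (\<beta>1 t) (\<beta>2 t))"
    and def_\<beta>012: "\<beta>012 = (\<lambda>u s t. ret_curve R Rinv (r012 u s t) u (\<beta>01 s t) (\<beta>12 s t))"
    and def_\<beta>: "\<beta> = (\<lambda>t. \<beta>012 t t t)"
    and wd: "\<forall>u\<in>{0..1}. \<forall>s\<in>{0..1}. \<forall>t\<in>{0..1}.
      ret_curve_wd R DR Rinv W 0 t b0 b1 \<and>
      ret_curve_wd R DR Rinv W (r1 t) t b1 b2 \<and>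
      ret_curve_wd R DR Rinv W 1 t b2 b3 \<and>
      ret_curve_wd R DR Rinv W (r01 s t) s (\<beta>0 t) (\<beta>1 t) \<and>
      ret_curve_wd R DR Rinv W (r12 s t) s (\<beta>1 t) (\<beta>2 t) \<and>
      ret_curve_wd R DR Rinv W (r012 u s t) u (\<beta>01 s t) (\<beta>12 s t)"
  shows
    "(\<beta>0 0 = b0 \<and> \<beta>0 1 = b1 \<and> \<beta>1 0 = b1 \<and> \<beta>1 1 = b2 \<and> \<beta>2 0 = b2 \<and> \<beta>2 1 = b3 \<and>
      (\<forall>s\<in>{0..1}. \<forall>t\<in>{0..1}.
         \<beta>01 0 t = \<beta>0 t \<and> \<beta>01 1 t = \<beta>1 t \<and> \<beta>12 0 t = \<beta>1 t \<and> \<beta>12 1 t = \<beta>2 t \<and>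
         \<beta>012 0 s t = \<beta>01 s t \<and> \<beta>012 1 s t = \<beta>12 s t))
   \<and> (\<forall>s\<in>{0..1}. \<beta>01 s 0 = \<beta>0 s \<and> \<beta>12 s 1 = \<beta>2 s \<and>
         \<beta>012 s 0 0 = \<beta>0 s \<and> \<beta>012 s 1 1 = \<beta>2 s)
   \<and> (\<beta> 0 = b0 \<and> \<beta> 1 = b3 \<and>
      (\<beta> has_vector_derivative 3 *\<^sub>R Rinv b0 b1) (at 0 within {0..1}) \<and>
      ((\<lambda>t. ret_curve R Rinv 0 t b0 b1) has_vector_derivative Rinv b0 b1) (at 0 within {0..1}) \<and>
      (\<beta> has_vector_derivative - (3 *\<^sub>R Rinv b3 b2)) (at 1 within {0..1}) \<and>
      ((\<lambda>t. ret_curve R Rinv 1 t b2 b3) has_vector_derivative - Rinv b3 b2) (at 1 within {0..1}))"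
proof -
  have sR: "smooth_on DR (\<lambda>(x, v). R x v)"
    using R by (simp add: manifold_retraction_def)
  have sI: "smooth_on W (\<lambda>(x, y). Rinv x y)"
    using Rinv by (simp add: retraction_local_inverse_def)
  note ends = ret_curve_endpoints[OF Rinv]
  have curve_ends: "\<beta>0 0 = b0" "\<beta>0 1 = b1" "\<beta>1 0 = b1" "\<beta>1 1 = b2" "\<beta>2 0 = b2" "\<beta>2 1 = b3"
    using wd[rule_format, of 0 0 0] wd[rule_format, of 0 0 1]
    by (auto simp: def_\<beta>0 def_\<beta>1 def_\<beta>2 dest: ends)
  have face_restrictions: "\<beta>01 0 t = \<beta>0 t \<and> \<beta>01 1 t = \<beta>1 t \<and> \<beta>12 0 t = \<beta>1 t \<and> \<beta>12 1 t = \<beta>2 t \<and>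
      \<beta>012 0 s t = \<beta>01 s t \<and> \<beta>012 1 s t = \<beta>12 s t"
    if "s \<in> {0..1}" "t \<in> {0..1}" for s t
    using wd[rule_format, of 0 0 t] wd[rule_format, of 0 1 t] wd[rule_format, of 0 s t]
      wd[rule_format, of 1 s t] that
    by (auto simp: def_\<beta>01 def_\<beta>12 def_\<beta>012 dest: ends)
  have edge_restrictions:
    "\<beta>01 s 0 = \<beta>0 s \<and> \<beta>12 s 1 = \<beta>2 s \<and> \<beta>012 s 0 0 = \<beta>0 s \<and> \<beta>012 s 1 1 = \<beta>2 s"
    if "s \<in> {0..1}" for s
    using bc that curve_ends face_restrictions[of 0 0] face_restrictions[of 1 1]
    by (simp add: def_\<beta>01 def_\<beta>12 def_\<beta>012 def_\<beta>0 def_\<beta>2)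
  have curves_diff:
    "\<beta>0 differentiable_on {0..1}" "\<beta>1 differentiable_on {0..1}" "\<beta>2 differentiable_on {0..1}"
    unfolding def_\<beta>0 def_\<beta>1 def_\<beta>2 using wd
    by (auto intro!: ret_curve_differentiable_on[OF sR sI] derivative_intros
        smooth_on_imp_differentiable_on[OF r1(1)])
  have \<beta>01_diff: "(\<lambda>(s, t). \<beta>01 s t) differentiable_on {0..1} \<times> {0..1}"
    unfolding def_\<beta>01
    by (rule ret_curve_family_differentiable_on[OF sR sI
          smooth_on_imp_differentiable_on[OF r01(1)] curves_diff(1,2), simplified]) (use wd in blast)
  have \<beta>12_diff: "(\<lambda>(s, t). \<beta>12 s t) differentiable_on {0..1} \<times> {0..1}"
    unfolding def_\<beta>12
    by (rule ret_curve_family_differentiable_on[OF sR sI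
          smooth_on_imp_differentiable_on[OF r12(1)] curves_diff(2,3), simplified]) (use wd in blast)
  have "(\<lambda>(u, s, t). \<beta>012 u s t) differentiable_on {0..1} \<times> {0..1} \<times> {0..1}"
    using ret_curve_family_differentiable_on[OF sR sI smooth_on_imp_differentiable_on[OF r012(1)]
        \<beta>01_diff \<beta>12_diff] wd
    by (auto simp: def_\<beta>012 split_def)
  then have diff:
    "(\<lambda>(u, s, t). \<beta>012 u s t) differentiable (at (c, c, c) within {0..1} \<times> {0..1} \<times> {0..1})"
    if "c \<in> {0..1}" for c
    using that by (simp add: differentiable_on_def)
  have d\<beta>0: "(\<beta>0 has_vector_derivative Rinv b0 b1) (at 0 within {0..1})"
    unfolding def_\<beta>0 by (rule ret_curve_zero_has_vector_derivative[OF R Rinv]) (use wd in blast)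
  have d\<beta>2: "(\<beta>2 has_vector_derivative - Rinv b3 b2) (at 1 within {0..1})"
    unfolding def_\<beta>2 by (rule ret_curve_one_has_vector_derivative[OF R Rinv]) (use wd in blast)
  have "(\<beta> has_vector_derivative 3 *\<^sub>R Rinv b0 b1) (at 0 within {0..1})"
    using diagonal_has_vector_derivative[OF diff[of 0], where g=\<beta>0] d\<beta>0
      face_restrictions edge_restrictions
    by (simp add: def_\<beta>)
  moreover have "(\<beta> has_vector_derivative - (3 *\<^sub>R Rinv b3 b2)) (at 1 within {0..1})"
    using diagonal_has_vector_derivative[OF diff[of 1], where g=\<beta>2 and v="- Rinv b3 b2"] d\<beta>2
      face_restrictions edge_restrictions
    by (simp add: def_\<beta>)
  ultimately show ?thesis
    using curve_ends face_restrictions edge_restrictions d\<beta>0 d\<beta>2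
    by (simp add: def_\<beta> flip: def_\<beta>0 def_\<beta>2)
qed

end
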